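(* Let $\mathcal{R}\subset\mathbb{R}_{>0}^n$ be a compact log-convex set and let $\ell:\mathcal{R}\to\mathbb{R}_{>0}$ be continuous. Then for every $\tilde\varepsilon>0$ there exist positive integers $p,q$ and a subtraction-free expression $E$ in $n$ variables $y_1,\dots,y_n$ such that the function $$f(\mathbf{x})=E(x_1^{1/q},\dots,x_n^{1/q})^{1/p}$$ (obtained by substituting $x_i^{1/q}$ for $y_i$) satisfies, for all $\mathbf{x}\in\mathcal{R}$, $$\left|\frac{\ell(\mathbf{x})-f(\mathbf{x})}{\min(\ell(\mathbf{x}),f(\mathbf{x}))}\right|\leqslant\tilde\varepsilon.$$
   Context: A set $\mathcal{R}\subset\mathbb{R}_{>0}^n$ is log-convex if its image under the entrywise logarithm is convex. A subtraction-free expression in variables $y_1,\dots,y_n$ is a formal term generated by the grammar $E\to E+E,\ E\times E,\ E/E,\ C,\ y_1,\dots,y_n$, where $C$ ranges over positive real constants (i.e., built from the variables and positive constants using only addition, multiplication and division, no subtraction); it is evaluated at positive arguments in the obvious way. *)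

theory Defs
  imports "HOL-Analysis.Analysis"
begin

datatype 'n sfexpr =
    SAdd "'n sfexpr" "'n sfexpr"
  | SMul "'n sfexpr" "'n sfexpr"
  | SDiv "'n sfexpr" "'n sfexpr"
  | SConst real
  | SVar 'n

fun sf_wf :: "'n sfexpr \<Rightarrow> bool" where
  "sf_wf (SAdd a b) = (sf_wf a \<and> sf_wf b)"
| "sf_wf (SMul a b) = (sf_wf a \<and> sf_wf b)"
| "sf_wf (SDiv a b) = (sf_wf a \<and> sf_wf b)"
| "sf_wf (SConst c) = (c > 0)"
| "sf_wf (SVar i) = True"

fun sf_eval :: "'n sfexpr \<Rightarrow> (real ^ 'n) \<Rightarrow> real" where
  "sf_eval (SAdd a b) y = sf_eval a y + sf_eval b y"
| "sf_eval (SMul a b) y = sf_eval a y * sf_eval b y"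
| "sf_eval (SDiv a b) y = sf_eval a y / sf_eval b y"
| "sf_eval (SConst c) y = c"
| "sf_eval (SVar i) y = y $ i"

definition positive_orthant :: "(real ^ 'n) set" where
  "positive_orthant = {x. \<forall>i. x $ i > 0}"

definition log_convex :: "(real ^ 'n) set \<Rightarrow> bool" where
  "log_convex R \<longleftrightarrow> R \<subseteq> positive_orthant \<and> convex ((\<lambda>x. \<chi> i. ln (x $ i)) ` R)"

end

theory Submission
  imports Defs
begin

text \<open>No roots are needed: \<open>p = q = 1\<close> works, and log-convexity only serves to place \<open>R\<close>
  in the positive orthant. By Stone--Weierstrass, \<open>\<ell>\<close> is uniformly close to a polynomial \<open>g\<close>,
  and every polynomial is a difference \<open>a - b\<close> of two subtraction-free expressions. Where
  \<open>g > 0\<close> we have \<open>t = b / a < 1\<close>, and \<open>a - b = a / (1 + t + t\<^sup>2 + \<dots>)\<close> is approximated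
  by the subtraction-free \<open>a / (1 + t + \<dots> + t\<^sup>k)\<close>, whose relative error
  \<open>t\<^sup>k\<^sup>+\<^sup>1 / (1 - t\<^sup>k\<^sup>+\<^sup>1)\<close> is uniformly small because \<open>t\<close> stays below a constant
  \<open>\<theta> < 1\<close> on the compact set. Since \<open>\<ell>\<close> is bounded away from \<open>0\<close>, a small absolute error
  is a small relative error.\<close>

lemma sf_eval_pos:
  assumes "sf_wf E" and "x \<in> positive_orthant"
  shows "sf_eval E x > 0"
  using assms by (induction E) (auto simp: positive_orthant_def)

lemma continuous_on_sf_eval:
  assumes "sf_wf E"
  shows "continuous_on positive_orthant (sf_eval E)"
  using assms
proof (induction E)
  case (SDiv a b)
  then show ?case
    using sf_eval_pos[of b] by (auto intro!: continuous_intros simp: less_imp_neq[symmetric])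
qed (auto intro!: continuous_intros)

lemma compact_continuous_pos_bounded_below:
  fixes f :: "'a::topological_space \<Rightarrow> real"
  assumes "compact K" and "continuous_on K f" and "\<forall>x\<in>K. f x > 0"
  obtains c where "c > 0" and "\<forall>x\<in>K. c \<le> f x"
proof (cases "K = {}")
  case True
  then show ?thesis using that[of 1] by simp
next
  case False
  then obtain x0 where "x0 \<in> K" and "\<forall>x\<in>K. f x0 \<le> f x"
    using continuous_attains_inf[OF assms(1) False assms(2)] by blast
  then show ?thesis using that[of "f x0"] assms(3) by blast
qed

lemma compact_continuous_bounded_above:
  fixes f :: "'a::topological_space \<Rightarrow> real"
  assumes "compact K" and "continuous_on K f"
  obtains M where "M > 0" and "\<forall>x\<in>K. f x \<le> M"
proof -
  have "bounded (f ` K)"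
    using compact_continuous_image[OF assms(2,1)] by (rule compact_imp_bounded)
  then show ?thesis
    using that unfolding bounded_pos by (auto dest: abs_le_D1)
qed

definition sf_differences :: "(real ^ 'n \<Rightarrow> real) set" where
  "sf_differences = {(\<lambda>x. sf_eval A x - sf_eval B x) | A B. sf_wf A \<and> sf_wf B}"

lemma sf_differencesI:
  assumes "sf_wf A" and "sf_wf B" and "\<And>x. g x = sf_eval A x - sf_eval B x"
  shows "g \<in> sf_differences"
  using assms unfolding sf_differences_def by blast

lemma sf_differencesE:
  assumes "g \<in> sf_differences"
  obtains A B where "sf_wf A" and "sf_wf B" and "g = (\<lambda>x. sf_eval A x - sf_eval B x)"
  using assms unfolding sf_differences_def by blast

lemma sf_differences_const: "(\<lambda>x. c) \<in> sf_differences"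
  by (rule sf_differencesI[of "SConst (max c 0 + 1)" "SConst (max (- c) 0 + 1)"]) auto

lemma sf_differences_component: "(\<lambda>x. x $ i) \<in> sf_differences"
  by (rule sf_differencesI[of "SAdd (SVar i) (SConst 1)" "SConst 1"]) auto

lemma sf_differences_add:
  assumes "f \<in> sf_differences" and "g \<in> sf_differences"
  shows "(\<lambda>x. f x + g x) \<in> sf_differences"
proof -
  obtain A1 B1 where wf1: "sf_wf A1" "sf_wf B1" and f: "f = (\<lambda>x. sf_eval A1 x - sf_eval B1 x)"
    using assms(1) by (rule sf_differencesE)
  obtain A2 B2 where wf2: "sf_wf A2" "sf_wf B2" and g: "g = (\<lambda>x. sf_eval A2 x - sf_eval B2 x)"
    using assms(2) by (rule sf_differencesE)
  show ?thesis
    by (rule sf_differencesI[of "SAdd A1 A2" "SAdd B1 B2"]) (simp_all add: wf1 wf2 f g)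
qed

lemma sf_differences_mult:
  assumes "f \<in> sf_differences" and "g \<in> sf_differences"
  shows "(\<lambda>x. f x * g x) \<in> sf_differences"
proof -
  obtain A1 B1 where wf1: "sf_wf A1" "sf_wf B1" and f: "f = (\<lambda>x. sf_eval A1 x - sf_eval B1 x)"
    using assms(1) by (rule sf_differencesE)
  obtain A2 B2 where wf2: "sf_wf A2" "sf_wf B2" and g: "g = (\<lambda>x. sf_eval A2 x - sf_eval B2 x)"
    using assms(2) by (rule sf_differencesE)
  show ?thesis
    by (rule sf_differencesI[of "SAdd (SMul A1 A2) (SMul B1 B2)" "SAdd (SMul A1 B2) (SMul B1 A2)"])
      (simp_all add: wf1 wf2 f g algebra_simps)
qed

lemma sf_differences_sum:
  assumes "finite S" and "\<forall>i\<in>S. f i \<in> sf_differences"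
  shows "(\<lambda>x. \<Sum>i\<in>S. f i x) \<in> sf_differences"
  using assms
proof (induction S rule: finite_induct)
  case empty
  then show ?case using sf_differences_const[of 0] by simp
next
  case (insert a F)
  then show ?case using sf_differences_add[of "f a" "\<lambda>x. \<Sum>i\<in>F. f i x"] by simp
qed

lemma sf_differences_linear:
  fixes f :: "real ^ 'n \<Rightarrow> real"
  assumes "linear f"
  shows "f \<in> sf_differences"
proof -
  have "f x = (\<Sum>i\<in>Basis. (x \<bullet> i) * f i)" for x
    using Linear_Algebra.linear_componentwise[OF assms, where j = 1 and x = x] by simp
  then have expansion: "f = (\<lambda>x. \<Sum>i\<in>Basis. (x \<bullet> i) * f i)" ..
  have "(\<lambda>x. (x \<bullet> i) * f i) \<in> sf_differences" if "i \<in> Basis" for i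
  proof -
    have "\<exists>j. i = axis j 1"
      using that unfolding Basis_vec_def by simp
    then show ?thesis
      using sf_differences_mult[OF sf_differences_component sf_differences_const] by (auto simp: inner_axis)
  qed
  then show ?thesis
    by (subst expansion) (simp add: sf_differences_sum)
qed

lemma sf_differences_polynomial:
  fixes g :: "real ^ 'n \<Rightarrow> real"
  assumes "real_polynomial_function g"
  shows "g \<in> sf_differences"
  using assms
proof (induction rule: real_polynomial_function.induct)
  case (linear f)
  then show ?case by (simp add: bounded_linear.linear sf_differences_linear)
qed (auto intro: sf_differences_const sf_differences_add sf_differences_mult)

fun sf_geometric :: "'n sfexpr \<Rightarrow> nat \<Rightarrow> 'n sfexpr" where
  "sf_geometric T 0 = SConst 1"
| "sf_geometric T (Suc k) = SAdd (SConst 1) (SMul T (sf_geometric T k))"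

lemma sf_wf_sf_geometric: "sf_wf T \<Longrightarrow> sf_wf (sf_geometric T k)"
  by (induction k) auto

lemma sf_eval_sf_geometric: "sf_eval (sf_geometric T k) x = (\<Sum>i\<le>k. sf_eval T x ^ i)"
  by (induction k) (simp_all add: sum.atMost_Suc_shift sum_distrib_left del: sum.atMost_Suc)

definition sf_diff_approx :: "'n sfexpr \<Rightarrow> 'n sfexpr \<Rightarrow> nat \<Rightarrow> 'n sfexpr" where
  "sf_diff_approx A B k = SDiv A (sf_geometric (SDiv B A) k)"

lemma sf_wf_sf_diff_approx: "sf_wf A \<Longrightarrow> sf_wf B \<Longrightarrow> sf_wf (sf_diff_approx A B k)"
  by (simp add: sf_diff_approx_def sf_wf_sf_geometric)

lemma sf_eval_sf_diff_approx:
  assumes "0 < sf_eval B x" and "sf_eval B x < sf_eval A x"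
  shows "sf_eval (sf_diff_approx A B k) x
    = (sf_eval A x - sf_eval B x) / (1 - (sf_eval B x / sf_eval A x) ^ Suc k)"
proof -
  define a b where "a = sf_eval A x" and "b = sf_eval B x"
  define t where "t = b / a"
  have "a > 0" and "t \<noteq> 1"
    using assms unfolding a_def b_def t_def by auto
  have "1 - t ^ Suc k = (1 - t) * (\<Sum>i\<le>k. t ^ i)"
    using one_diff_power_eq[of t "Suc k"] by (simp add: lessThan_Suc_atMost)
  moreover have "a - b = a * (1 - t)"
    using \<open>a > 0\<close> by (simp add: t_def algebra_simps)
  ultimately have "a / (\<Sum>i\<le>k. t ^ i) = (a - b) / (1 - t ^ Suc k)"
    using \<open>t \<noteq> 1\<close> by simp
  then show ?thesis
    by (simp add: sf_diff_approx_def sf_eval_sf_geometric a_def b_def t_def)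
qed

lemma truncation_error_le:
  fixes g M s :: real
  assumes "0 \<le> g" and "g \<le> M" and "0 \<le> s" and "s \<le> 1/2"
  shows "\<bar>g / (1 - s) - g\<bar> \<le> 2 * M * s"
proof -
  have "g / (1 - s) - g = g * s / (1 - s)"
    using assms(4) by (simp add: field_simps)
  also have "\<dots> \<le> M * s / (1/2)"
    using assms by (intro frac_le mult_right_mono) auto
  finally show ?thesis
    using assms by (simp add: field_simps)
qed

lemma sf_diff_approx_uniform:
  assumes "compact K" and "K \<subseteq> positive_orthant" and "sf_wf A" and "sf_wf B"
    and "\<forall>x\<in>K. sf_eval B x < sf_eval A x" and "\<eta> > 0"
  obtains k where
    "\<forall>x\<in>K. \<bar>sf_eval (sf_diff_approx A B k) x - (sf_eval A x - sf_eval B x)\<bar> \<le> \<eta>"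
proof -
  have cont_A: "continuous_on K (sf_eval A)" and cont_B: "continuous_on K (sf_eval B)"
    using assms(2-4) by (auto intro: continuous_on_subset continuous_on_sf_eval)
  obtain c where "c > 0" and c: "\<forall>x\<in>K. c \<le> sf_eval A x - sf_eval B x"
    using compact_continuous_pos_bounded_below[OF assms(1) continuous_on_diff[OF cont_A cont_B]]
      assms(5) by auto
  obtain M where "M > 0" and M: "\<forall>x\<in>K. sf_eval A x \<le> M"
    using compact_continuous_bounded_above[OF assms(1) cont_A] by blast
  define \<theta> where "\<theta> = 1 - c / M"
  define \<sigma> where "\<sigma> = min (1/2) (\<eta> / (2 * M))"
  have "\<sigma> > 0"
    using \<open>\<eta> > 0\<close> \<open>M > 0\<close> by (simp add: \<sigma>_def)
  moreover have "\<theta> < 1"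
    using \<open>c > 0\<close> \<open>M > 0\<close> by (simp add: \<theta>_def)
  ultimately obtain N where "\<theta> ^ N < \<sigma>"
    using real_arch_pow_inv by blast
  moreover have "N \<noteq> 0"
    using calculation by (cases N) (auto simp: \<sigma>_def)
  ultimately obtain k where k: "\<theta> ^ Suc k < \<sigma>"
    using not0_implies_Suc by blast
  show ?thesis
  proof (rule that, intro ballI)
    fix x assume "x \<in> K"
    define a b where "a = sf_eval A x" and "b = sf_eval B x"
    have "0 < b" and "b < a" and "a \<le> M" and "c \<le> a - b"
      using sf_eval_pos[OF assms(4)] assms(2,5) M c \<open>x \<in> K\<close> unfolding a_def b_def by auto
    have "c / M \<le> (a - b) / a"
      using \<open>c > 0\<close> \<open>0 < b\<close> \<open>b < a\<close> \<open>a \<le> M\<close> \<open>c \<le> a - b\<close> by (intro frac_le) auto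
    then have "b / a \<le> \<theta>"
      using \<open>b < a\<close> \<open>0 < b\<close> by (simp add: \<theta>_def diff_divide_distrib)
    define s where "s = (b / a) ^ Suc k"
    have "0 \<le> b / a"
      using \<open>0 < b\<close> \<open>b < a\<close> by simp
    then have "0 \<le> s" and "s \<le> \<theta> ^ Suc k"
      unfolding s_def using \<open>b / a \<le> \<theta>\<close> by (blast intro: zero_le_power power_mono)+
    then have "s \<le> 1/2" and "s \<le> \<eta> / (2 * M)"
      using k unfolding \<sigma>_def by auto
    then have "2 * M * s \<le> \<eta>"
      using \<open>M > 0\<close> by (simp add: field_simps)
    then show "\<bar>sf_eval (sf_diff_approx A B k) x - (sf_eval A x - sf_eval B x)\<bar> \<le> \<eta>"
      using truncation_error_le[of "a - b" M s] \<open>0 \<le> s\<close> \<open>s \<le> 1/2\<close> \<open>0 < b\<close> \<open>b < a\<close> \<open>a \<le> M\<close>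
      by (simp add: sf_eval_sf_diff_approx a_def b_def s_def)
  qed
qed

lemma sf_uniform_approximation:
  fixes l :: "real ^ 'n \<Rightarrow> real"
  assumes "compact K" and "K \<subseteq> positive_orthant"
    and "continuous_on K l" and "\<forall>x\<in>K. l x > 0" and "\<eta> > 0"
  obtains E where "sf_wf E" and "\<forall>x\<in>K. \<bar>l x - sf_eval E x\<bar> \<le> \<eta>"
proof -
  obtain m where "m > 0" and m: "\<forall>x\<in>K. m \<le> l x"
    using compact_continuous_pos_bounded_below[OF assms(1,3,4)] by blast
  define \<delta> where "\<delta> = min (m / 2) (\<eta> / 2)"
  have "\<delta> > 0"
    using \<open>m > 0\<close> \<open>\<eta> > 0\<close> by (simp add: \<delta>_def)
  then obtain g where "polynomial_function g" and g: "\<forall>x\<in>K. \<bar>l x - g x\<bar> < \<delta>"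
    using Stone_Weierstrass_polynomial_function[OF assms(1,3)] by auto
  then have "g \<in> sf_differences"
    by (simp add: real_polynomial_function_eq sf_differences_polynomial)
  then obtain A B where "sf_wf A" and "sf_wf B" and g_eq: "g = (\<lambda>x. sf_eval A x - sf_eval B x)"
    by (rule sf_differencesE)
  have "sf_eval B x < sf_eval A x" if "x \<in> K" for x
  proof -
    have "\<bar>l x - g x\<bar> < m / 2" and "m \<le> l x"
      using g m that unfolding \<delta>_def by auto
    then show ?thesis
      using \<open>m > 0\<close> unfolding g_eq by arith
  qed
  then obtain k where
    k: "\<forall>x\<in>K. \<bar>sf_eval (sf_diff_approx A B k) x - g x\<bar> \<le> \<delta>"
    using sf_diff_approx_uniform[OF assms(1,2) \<open>sf_wf A\<close> \<open>sf_wf B\<close> _ \<open>\<delta> > 0\<close>]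
    unfolding g_eq by blast
  show ?thesis
  proof (rule that)
    show "sf_wf (sf_diff_approx A B k)"
      using \<open>sf_wf A\<close> \<open>sf_wf B\<close> by (rule sf_wf_sf_diff_approx)
    show "\<forall>x\<in>K. \<bar>l x - sf_eval (sf_diff_approx A B k) x\<bar> \<le> \<eta>"
    proof
      fix x assume "x \<in> K"
      then have "\<bar>l x - g x\<bar> \<le> \<eta> / 2" and "\<bar>sf_eval (sf_diff_approx A B k) x - g x\<bar> \<le> \<eta> / 2"
        using g k unfolding \<delta>_def by (auto simp: less_imp_le)
      then show "\<bar>l x - sf_eval (sf_diff_approx A B k) x\<bar> \<le> \<eta>"
        by arith
    qed
  qed
qed

lemma relative_error_le:
  fixes l f m d \<epsilon> :: real
  assumes "0 < m" and "m \<le> l" and "\<bar>l - f\<bar> \<le> d" and "d \<le> m / 2" and "d \<le> \<epsilon> * m / 2"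
  shows "\<bar>(l - f) / min l f\<bar> \<le> \<epsilon>"
proof -
  have "m / 2 \<le> min l f"
    using assms by linarith
  then have "\<bar>(l - f) / min l f\<bar> = \<bar>l - f\<bar> / min l f"
    using \<open>0 < m\<close> by (simp add: abs_divide)
  also have "\<dots> \<le> d / (m / 2)"
    by (rule frac_le) (use assms \<open>m / 2 \<le> min l f\<close> in auto)
  also have "\<dots> \<le> \<epsilon>"
    using assms by (simp add: field_simps)
  finally show ?thesis .
qed

theorem corollary4:
  fixes R :: "(real ^ 'n) set" and l :: "real ^ 'n \<Rightarrow> real"
  assumes "compact R" and "log_convex R"
    and "continuous_on R l" and "\<forall>x\<in>R. l x > 0"
    and "\<epsilon> > (0::real)"
  shows "\<exists>(p::nat) (q::nat) (E::'n sfexpr). p > 0 \<and> q > 0 \<and> sf_wf E \<and>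
     (\<forall>x\<in>R. let f = (sf_eval E (\<chi> i. (x $ i) powr (1 / real q))) powr (1 / real p) in
        \<bar>(l x - f) / min (l x) f\<bar> \<le> \<epsilon>)"
proof -
  have R_pos: "R \<subseteq> positive_orthant"
    using assms(2) by (simp add: log_convex_def)
  obtain m where "m > 0" and m: "\<forall>x\<in>R. m \<le> l x"
    using compact_continuous_pos_bounded_below[OF assms(1,3,4)] by blast
  define d where "d = min (m / 2) (\<epsilon> * m / 2)"
  have "d > 0"
    using \<open>m > 0\<close> \<open>\<epsilon> > 0\<close> by (simp add: d_def)
  then obtain E where "sf_wf E" and E: "\<forall>x\<in>R. \<bar>l x - sf_eval E x\<bar> \<le> d"
    using sf_uniform_approximation[OF assms(1) R_pos assms(3,4)] by blast
  have no_roots: "sf_eval E (\<chi> i. (x $ i) powr (1 / real 1)) powr (1 / real 1) = sf_eval E x"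
    if "x \<in> R" for x
  proof -
    have "x \<in> positive_orthant"
      using that R_pos by blast
    then have "(\<chi> i. (x $ i) powr (1 / real 1)) = x"
      by (simp add: positive_orthant_def vec_eq_iff less_imp_le)
    then show ?thesis
      using sf_eval_pos[OF \<open>sf_wf E\<close> \<open>x \<in> positive_orthant\<close>] by simp
  qed
  show ?thesis
  proof (intro exI[of _ 1] exI[of _ E] conjI ballI)
    show "let f = sf_eval E (\<chi> i. (x $ i) powr (1 / real 1)) powr (1 / real 1) in
        \<bar>(l x - f) / min (l x) f\<bar> \<le> \<epsilon>" if "x \<in> R" for x
      unfolding Let_def no_roots[OF that]
      using \<open>m > 0\<close> m E that by (intro relative_error_le[of m _ _ d]) (auto simp: d_def)
  qed (simp_all add: \<open>sf_wf E\<close>)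
qed

end
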